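(* Let $X$ be a finite topological space and $x\in X$. Then for every $y\in X$, $\Psi(y,x)\le |\{a\in X\mid \Psi(x,a)=0\}|$, i.e. the furtherness of any point $y$ from $x$ is at most the number of zeros in the row of $x$ of the furtherness matrix.
   Context: For a finite topological space $X$ and $x\in X$, $U_x$ denotes the minimal open set containing $x$. A nested sequence of open sets around $x$ is a finite sequence $U_0\subsetneq U_1\subsetneq\cdots\subsetneq U_m=X$ of open sets with $U_0=U_x$ such that for each $j$ there is no open set $V$ with $U_j\subsetneq V\subsetneq U_{j+1}$. The furtherness function $\Psi:X\times X\to\{0,1,\dots,|X|-1\}$ is defined by: $\Psi(x,y)$ is the smallest integer $k\ge 0$ such that there exists a nested sequence $(U_j)_{j\ge0}$ of open sets around $x$ with $y\in U_k$. The furtherness matrix of $X=\{a_1,\dots,a_n\}$ has $(i,j)$ entry $\Psi(a_i,a_j)$. *)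

theory Defs
  imports "HOL-Analysis.Analysis"
begin

definition minimal_open :: "'a topology \<Rightarrow> 'a \<Rightarrow> 'a set" where
  "minimal_open T x = \<Inter>{U. openin T U \<and> x \<in> U}"

definition nested_seq :: "'a topology \<Rightarrow> 'a \<Rightarrow> (nat \<Rightarrow> 'a set) \<Rightarrow> nat \<Rightarrow> bool" where
  "nested_seq T x U m \<longleftrightarrow>
     U 0 = minimal_open T x \<and>
     U m = topspace T \<and>
     (\<forall>j\<le>m. openin T (U j)) \<and>
     (\<forall>j<m. U j \<subset> U (Suc j)) \<and>
     (\<forall>j<m. \<not> (\<exists>V. openin T V \<and> U j \<subset> V \<and> V \<subset> U (Suc j)))"

definition furtherness :: "'a topology \<Rightarrow> 'a \<Rightarrow> 'a \<Rightarrow> nat" where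
  "furtherness T x y = (LEAST k. \<exists>U m. nested_seq T x U m \<and> k \<le> m \<and> y \<in> U k)"

end

theory Submission
  imports Defs
begin

text \<open>In a finite space any open sets \<open>A \<subseteq> W\<close> are joined by a saturated chain of open sets,
  and since each step adds at least one point it has at most \<open>|W - A|\<close> steps. Continuing such a
  chain from \<open>U\<^sub>y\<close> through \<open>W = U\<^sub>y \<union> U\<^sub>x \<ni> x\<close> up to \<open>X\<close> yields a nested sequence around \<open>y\<close>
  witnessing \<open>\<Psi>(y,x) \<le> |W - U\<^sub>y| \<le> |U\<^sub>x|\<close>; and \<open>\<Psi>(x,a) = 0\<close> for every \<open>a \<in> U\<^sub>x\<close>.\<close>

definition open_covered_by :: "'a topology \<Rightarrow> 'a set \<Rightarrow> 'a set \<Rightarrow> bool" where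
  "open_covered_by T A B \<longleftrightarrow>
     openin T A \<and> openin T B \<and> A \<subset> B \<and> \<not> (\<exists>V. openin T V \<and> A \<subset> V \<and> V \<subset> B)"

definition saturated_chain :: "'a topology \<Rightarrow> (nat \<Rightarrow> 'a set) \<Rightarrow> nat \<Rightarrow> bool" where
  "saturated_chain T U m \<longleftrightarrow>
     openin T (U 0) \<and> (\<forall>j<m. open_covered_by T (U j) (U (Suc j)))"

lemma nested_seq_iff_saturated_chain:
  "nested_seq T x U m \<longleftrightarrow>
     U 0 = minimal_open T x \<and> U m = topspace T \<and> saturated_chain T U m"
proof -
  have "(\<forall>j\<le>m. openin T (U j)) \<longleftrightarrow>
      openin T (U 0) \<and> (\<forall>j<m. openin T (U j) \<and> openin T (U (Suc j)))"
  proof safe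
    fix j assume "\<forall>j\<le>m. openin T (U j)" "j < m"
    then show "openin T (U j)" "openin T (U (Suc j))" by simp_all
  next
    fix j assume "\<forall>j<m. openin T (U j) \<and> openin T (U (Suc j))" "openin T (U 0)" "j \<le> m"
    then show "openin T (U j)" by (cases j) auto
  qed simp
  moreover have "(\<forall>j<m. open_covered_by T (U j) (U (Suc j))) \<longleftrightarrow>
      (\<forall>j<m. openin T (U j) \<and> openin T (U (Suc j))) \<and> (\<forall>j<m. U j \<subset> U (Suc j)) \<and>
      (\<forall>j<m. \<not> (\<exists>V. openin T V \<and> U j \<subset> V \<and> V \<subset> U (Suc j)))"
    unfolding open_covered_by_def by (simp only: imp_conjR all_conj_distrib conj_assoc)
  ultimately show ?thesis
    unfolding nested_seq_def saturated_chain_def by argo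
qed

lemma saturated_chain_append:
  assumes U: "saturated_chain T U m" and V: "saturated_chain T V n" and "U m = V 0"
  shows "saturated_chain T (\<lambda>j. if j \<le> m then U j else V (j - m)) (m + n)"
proof -
  define W where "W j = (if j \<le> m then U j else V (j - m))" for j
  have W_high: "W j = V (j - m)" if "m \<le> j" for j
    using that \<open>U m = V 0\<close> by (auto simp: W_def)
  have "open_covered_by T (W j) (W (Suc j))" if "j < m + n" for j
  proof (cases "j < m")
    case True
    then show ?thesis using U by (simp add: W_def saturated_chain_def)
  next
    case False
    then have "W j = V (j - m)" "W (Suc j) = V (Suc (j - m))" "j - m < n"
      using W_high \<open>j < m + n\<close> by (auto simp: Suc_diff_le)
    then show ?thesis using V by (simp add: saturated_chain_def)
  qed
  moreover have "openin T (W 0)" using U by (simp add: W_def saturated_chain_def)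
  ultimately show ?thesis unfolding saturated_chain_def W_def by blast
qed

lemma finite_open_sets:
  assumes "finite (topspace T)"
  shows "finite {U. openin T U \<and> P U}"
proof -
  have "{U. openin T U \<and> P U} \<subseteq> Pow (topspace T)" by (auto dest: openin_subset)
  then show ?thesis using assms by (meson finite_Pow_iff rev_finite_subset)
qed

lemma open_covered_by_exists:
  assumes "finite (topspace T)" "openin T A" "openin T W" "A \<subset> W"
  obtains V where "open_covered_by T A V" "V \<subseteq> W"
proof -
  let ?S = "{V. openin T V \<and> A \<subset> V \<and> V \<subseteq> W}"
  have "finite ?S" using finite_open_sets[OF assms(1)] .
  moreover have "W \<in> ?S" using assms(3,4) by blast
  ultimately obtain V where "V \<in> ?S" and minimal: "\<forall>V'\<in>?S. V' \<subseteq> V \<longrightarrow> V = V'"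
    using finite_has_minimal[of ?S] by blast
  have "\<not> (\<exists>V'. openin T V' \<and> A \<subset> V' \<and> V' \<subset> V)"
  proof
    assume "\<exists>V'. openin T V' \<and> A \<subset> V' \<and> V' \<subset> V"
    then obtain V' where "openin T V'" "A \<subset> V'" "V' \<subset> V" by blast
    with \<open>V \<in> ?S\<close> have "V' \<in> ?S" by auto
    with minimal \<open>V' \<subset> V\<close> show False by auto
  qed
  moreover from \<open>V \<in> ?S\<close> have "openin T V" "A \<subset> V" "V \<subseteq> W" by simp_all
  ultimately show thesis
    using assms(2) by (intro that) (simp_all add: open_covered_by_def)
qed

lemma saturated_chain_exists:
  assumes "finite (topspace T)" "openin T A" "openin T W" "A \<subseteq> W"
  shows "\<exists>U m. saturated_chain T U m \<and> U 0 = A \<and> U m = W \<and> m \<le> card (W - A)"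
  using assms(2-)
proof (induction "card (W - A)" arbitrary: A rule: less_induct)
  case less
  show ?case
  proof (cases "A = W")
    case True
    then show ?thesis using less.prems
      by (intro exI[of _ "\<lambda>_. A"] exI[of _ 0]) (simp add: saturated_chain_def)
  next
    case False
    with less.prems obtain V where V: "open_covered_by T A V" "V \<subseteq> W"
      using open_covered_by_exists[OF assms(1)] by blast
    have "finite W" using assms(1) less.prems(2) by (meson openin_subset rev_finite_subset)
    then have smaller: "card (W - V) < card (W - A)"
      using V by (intro psubset_card_mono) (auto simp: open_covered_by_def)
    moreover have "openin T V" using V(1) by (simp add: open_covered_by_def)
    ultimately obtain U m where U: "saturated_chain T U m" "U 0 = V" "U m = W" "m \<le> card (W - V)"
      using less.hyps less.prems(2) V(2) by blast
    have first_step: "saturated_chain T (\<lambda>j. if j = 0 then A else V) 1"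
      using V(1) by (simp add: saturated_chain_def open_covered_by_def)
    let ?U = "\<lambda>j. if j \<le> 1 then if j = 0 then A else V else U (j - 1)"
    have "saturated_chain T ?U (1 + m)"
      using saturated_chain_append[OF first_step U(1)] U(2) by simp
    moreover have "?U (1 + m) = W" using U(2,3) by (cases m) simp_all
    ultimately show ?thesis
      using U(4) smaller by (intro exI[of _ ?U] exI[of _ "1 + m"]) simp
  qed
qed

lemma openin_minimal_open:
  assumes "finite (topspace T)" "x \<in> topspace T"
  shows "openin T (minimal_open T x)"
  unfolding minimal_open_def
  using finite_open_sets[OF assms(1), of "\<lambda>U. x \<in> U"] assms(2) by (intro openin_Inter) auto

lemma mem_minimal_open: "x \<in> minimal_open T x"
  by (simp add: minimal_open_def)

lemma nested_seq_through:
  assumes fin: "finite (topspace T)" and y: "y \<in> topspace T"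
    and W: "openin T W" "minimal_open T y \<subseteq> W"
  obtains U m k where "nested_seq T y U m" "k \<le> m" "U k = W"
    "k \<le> card (W - minimal_open T y)"
proof -
  obtain U\<^sub>1 k where U\<^sub>1: "saturated_chain T U\<^sub>1 k" "U\<^sub>1 0 = minimal_open T y" "U\<^sub>1 k = W"
    "k \<le> card (W - minimal_open T y)"
    using saturated_chain_exists[OF fin openin_minimal_open[OF fin y] W] by blast
  obtain U\<^sub>2 n where U\<^sub>2: "saturated_chain T U\<^sub>2 n" "U\<^sub>2 0 = W" "U\<^sub>2 n = topspace T"
    using saturated_chain_exists[OF fin W(1)] openin_subset[OF W(1)] by blast
  let ?U = "\<lambda>j. if j \<le> k then U\<^sub>1 j else U\<^sub>2 (j - k)"
  have "saturated_chain T ?U (k + n)"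
    using saturated_chain_append[OF U\<^sub>1(1) U\<^sub>2(1)] U\<^sub>1(3) U\<^sub>2(2) by simp
  moreover have "?U (k + n) = topspace T"
    using U\<^sub>1(3) U\<^sub>2 by (cases n) auto
  ultimately have "nested_seq T y ?U (k + n)"
    using U\<^sub>1(2) by (simp add: nested_seq_iff_saturated_chain)
  then show thesis using U\<^sub>1(3,4) by (intro that[of ?U "k + n" k]) simp_all
qed

lemma furtherness_le_card_diff:
  assumes "finite (topspace T)" "y \<in> topspace T"
    and "openin T W" "minimal_open T y \<subseteq> W" "a \<in> W"
  shows "furtherness T y a \<le> card (W - minimal_open T y)"
proof -
  obtain U m k where "nested_seq T y U m" "k \<le> m" "U k = W"
    and k: "k \<le> card (W - minimal_open T y)"
    using nested_seq_through[OF assms(1-4)] .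
  then have "furtherness T y a \<le> k"
    unfolding furtherness_def using \<open>a \<in> W\<close> by (intro Least_le) auto
  with k show ?thesis by linarith
qed

lemma furtherness_minimal_open:
  assumes "finite (topspace T)" "x \<in> topspace T" "a \<in> minimal_open T x"
  shows "furtherness T x a = 0"
  using furtherness_le_card_diff[OF assms(1,2) openin_minimal_open[OF assms(1,2)] order_refl assms(3)]
  by simp

theorem mainTheorem16:
  fixes T :: "'a topology" and x y :: 'a
  assumes "finite (topspace T)"
    and "x \<in> topspace T"
    and "y \<in> topspace T"
  shows "furtherness T y x \<le> card {a \<in> topspace T. furtherness T x a = 0}"
proof -
  have open_x: "openin T (minimal_open T x)" and open_y: "openin T (minimal_open T y)"
    by (simp_all add: openin_minimal_open assms)
  have "furtherness T y x \<le> card ((minimal_open T y \<union> minimal_open T x) - minimal_open T y)"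
    by (intro furtherness_le_card_diff assms openin_Un open_x open_y)
      (auto simp: mem_minimal_open)
  also have "\<dots> \<le> card (minimal_open T x)"
    using openin_subset[OF open_x] assms(1) by (intro card_mono) (auto intro: rev_finite_subset)
  also have "\<dots> \<le> card {a \<in> topspace T. furtherness T x a = 0}"
    using openin_subset[OF open_x] furtherness_minimal_open[OF assms(1,2)] assms(1)
    by (intro card_mono) auto
  finally show ?thesis .
qed

end
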